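(* Let $m$ be an integer and $i\geq 2$. (i) If $m=N_i(1+(x-1)^5h(x))$ for some $h\in\mathbb Z[x]$, then for every $2\leq j\leq i$ there is $h_j\in\mathbb Z[x]$ with $m=N_j(1+(x-1)^5h_j(x))$ and $3\mid h_j(1)$ if and only if $3\mid h(1)$; and there are integers $A,B$ with $3m=N_1(1-x+9(A+B(1-x)))$, where $3\nmid A$ if $3\nmid h(1)$ and $3\mid A$ if $3\mid h(1)$. (ii) If $m=N_i(1+(x-1)^7t(x))$ for some $t\in\mathbb Z[x]$, then for every $2\leq j\leq i$ there is $t_j\in\mathbb Z[x]$ with $m=N_j(1+(x-1)^7t_j(x))$ and $3\mid t_j(1)$ if and only if $3\mid t(1)$.
   Context: For $k\geq1$, $\omega_k=e^{2\pi i/3^k}$ and $N_k(F)=\prod_{1\leq \ell\leq 3^k,\ 3\nmid \ell}F(\omega_k^\ell)$. *)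

theory Defs
  imports Complex_Main "HOL-Computational_Algebra.Polynomial"
begin

definition omega :: "nat \<Rightarrow> complex" where
  "omega k = cis (2 * pi / 3 ^ k)"

definition Nk :: "nat \<Rightarrow> int poly \<Rightarrow> complex" where
  "Nk k F = (\<Prod>l \<in> {l::nat. 1 \<le> l \<and> l \<le> 3 ^ k \<and> \<not> 3 dvd l}.
               poly (map_poly of_int F) (omega k ^ l))"

end

(*
  Split F(x) = a(x^3) + x b(x^3) + x^2 c(x^3). If w^3 = z, then w, w omega_1 and w omega_1^2
  are the three cube roots of z and F(w) F(w omega_1) F(w omega_1^2) = a^3 + z b^3 + z^2 c^3
  - 3 z a b c, so N_(k+1)(F) = N_k(F') for an explicit F' in Z[x]. For F = 1 + (x-1)^n h one
  gets F' = 1 + 3 E + (x-1)^n R at the roots of unity, with R(1) = h(1) mod 3 by Fermat's little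
  theorem. For k >= 2 the number 3 is (z-1)^6 times an algebraic integer at every primitive
  3^k-th root of unity z, which absorbs 3 E into the (x-1)^n term: directly for n = 5, and for
  n = 7 because (x-1)^6 = (x^3-1)^2 mod 3 makes E divisible by (x-1)^2 modulo 3. The last step,
  from level 2 to level 1, uses (x-1)^5 = (x^3-1)(x^2+x+1) mod 3 and (1-z)^2 = -3z for a
  primitive cube root of unity z.
*)
theory Submission
  imports Defs "HOL-Number_Theory.Cong"
begin

definition ipoly :: "int poly \<Rightarrow> complex \<Rightarrow> complex" where
  "ipoly p = poly (map_poly of_int p)"

lemma map_poly_of_int_add:
  "map_poly (of_int :: int \<Rightarrow> 'a::comm_ring_1) (p + q) = map_poly of_int p + map_poly of_int q"
  by (rule poly_eqI) (simp add: coeff_map_poly)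

lemma map_poly_of_int_mult:
  "map_poly (of_int :: int \<Rightarrow> 'a::comm_ring_1) (p * q) = map_poly of_int p * map_poly of_int q"
  by (induction p) (simp_all add: map_poly_pCons map_poly_of_int_add map_poly_smult)

lemma ipoly_0 [simp]: "ipoly 0 z = 0"
  and ipoly_1 [simp]: "ipoly 1 z = 1"
  and ipoly_pCons [simp]: "ipoly (pCons a p) z = of_int a + z * ipoly p z"
  and ipoly_add [simp]: "ipoly (p + q) z = ipoly p z + ipoly q z"
  and ipoly_mult [simp]: "ipoly (p * q) z = ipoly p z * ipoly q z"
  and ipoly_smult [simp]: "ipoly (smult c p) z = of_int c * ipoly p z"
  by (simp_all add: ipoly_def map_poly_pCons map_poly_of_int_add map_poly_of_int_mult
      map_poly_smult)

lemma ipoly_uminus [simp]: "ipoly (- p) z = - ipoly p z"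
  using ipoly_add[of p "- p" z] by (simp add: eq_neg_iff_add_eq_0 add.commute)

lemma ipoly_diff [simp]: "ipoly (p - q) z = ipoly p z - ipoly q z"
  using ipoly_add[of p "- q" z] by simp

lemma ipoly_power [simp]: "ipoly (p ^ n) z = ipoly p z ^ n"
  by (induction n) simp_all

lemma ipoly_numeral [simp]: "ipoly (numeral n) z = numeral n"
  by (subst numeral_poly) simp

section \<open>Roots of unity of order a power of 3\<close>

definition prim_exps :: "nat \<Rightarrow> nat set" where
  "prim_exps k = {l. 1 \<le> l \<and> l \<le> 3 ^ k \<and> \<not> 3 dvd l}"

lemma prim_exps_1: "prim_exps 1 = {1, 2}"
  unfolding prim_exps_def by (auto; presburger)

lemma mem_prim_exps:
  assumes "1 \<le> k"
  shows "l \<in> prim_exps k \<longleftrightarrow> 0 < l \<and> l < 3 ^ k \<and> \<not> 3 dvd l"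
proof -
  have "3 dvd (3::nat) ^ k"
    using assms by (simp add: dvd_power)
  then show ?thesis
    unfolding prim_exps_def by (auto simp: order.order_iff_strict)
qed

lemma Nk_eq_prod: "Nk k F = (\<Prod>l\<in>prim_exps k. ipoly F (omega k ^ l))"
  unfolding Nk_def prim_exps_def ipoly_def ..

lemma Nk_cong:
  assumes "\<And>l. l \<in> prim_exps k \<Longrightarrow> ipoly F (omega k ^ l) = ipoly G (omega k ^ l)"
  shows "Nk k F = Nk k G"
  unfolding Nk_eq_prod using assms by (rule prod.cong[OF refl])

lemma omega_Suc_cube: "omega (Suc k) ^ 3 = omega k"
  unfolding omega_def by (simp add: DeMoivre field_simps)

lemma omega_Suc_pow: "omega (Suc k) ^ 3 ^ k = omega 1"
  unfolding omega_def by (simp add: DeMoivre field_simps)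

lemma omega_1_cube: "omega 1 ^ 3 = 1"
  using omega_Suc_cube[of 0] by (simp add: omega_def)

lemma omega_1_cube_root: "omega 1 ^ 2 + omega 1 + 1 = 0"
proof -
  have "sin (2 * pi / 3) > 0"
    by (rule sin_gt_zero) auto
  then have "omega 1 \<noteq> 1"
    by (auto simp: omega_def complex_eq_iff)
  moreover have "(omega 1 - 1) * (omega 1 ^ 2 + omega 1 + 1) = omega 1 ^ 3 - 1"
    by (simp add: algebra_simps power2_eq_square power3_eq_cube)
  ultimately show ?thesis
    using omega_1_cube by simp
qed

lemma omega_1_pow_cube_root:
  assumes "\<not> 3 dvd l"
  shows "(omega 1 ^ l) ^ 2 + omega 1 ^ l + 1 = 0"
proof -
  have "omega 1 ^ l = (omega 1 ^ 3) ^ (l div 3) * omega 1 ^ (l mod 3)"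
    by (simp flip: power_mult power_add)
  then have pow_mod: "omega 1 ^ l = omega 1 ^ (l mod 3)"
    by (simp only: omega_1_cube power_one mult_1)
  have "l mod 3 = 1 \<or> l mod 3 = 2"
    using assms by presburger
  then show ?thesis
  proof
    assume "l mod 3 = 1"
    then show ?thesis
      using omega_1_cube_root pow_mod by simp
  next
    assume "l mod 3 = 2"
    moreover have "(omega 1 ^ 2) ^ 2 = omega 1"
      using omega_1_cube by (simp add: eval_nat_numeral)
    ultimately show ?thesis
      using omega_1_cube_root pow_mod by (simp add: add_ac)
  qed
qed

lemma omega_pow_prim_exps:
  assumes "1 \<le> k" and "l \<in> prim_exps k"
  shows "((omega k ^ l) ^ 3 ^ (k - 1)) ^ 2 + (omega k ^ l) ^ 3 ^ (k - 1) + 1 = 0"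
proof -
  obtain k' where k: "k = Suc k'"
    using assms by (cases k) auto
  have "(omega k ^ l) ^ 3 ^ (k - 1) = (omega (Suc k') ^ 3 ^ k') ^ l"
    unfolding k by (simp flip: power_mult add: mult.commute)
  also have "\<dots> = omega 1 ^ l"
    by (simp only: omega_Suc_pow)
  finally have "(omega k ^ l) ^ 3 ^ (k - 1) = omega 1 ^ l" .
  then show ?thesis
    using omega_1_pow_cube_root assms(2) by (simp add: prim_exps_def)
qed

lemma prim_exps_Suc:
  assumes "1 \<le> k"
  shows "bij_betw (\<lambda>(l, s). l + s * 3 ^ k) (prim_exps k \<times> {..<3}) (prim_exps (Suc k))"
proof (rule bij_betw_byWitness[where f' = "\<lambda>L. (L mod 3 ^ k, L div 3 ^ k)"])
  have dvd_iff: "3 dvd l + s * 3 ^ k \<longleftrightarrow> 3 dvd l" for l s :: nat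
    using assms by (simp add: dvd_add_left_iff dvd_power)
  show "(\<lambda>(l, s). l + s * 3 ^ k) ` (prim_exps k \<times> {..<3}) \<subseteq> prim_exps (Suc k)"
  proof clarify
    fix l s :: nat
    assume "l \<in> prim_exps k" "s < 3"
    moreover have "l + s * 3 ^ k < 3 ^ k + 2 * 3 ^ k" if "l < 3 ^ k" "s < 3"
      using that by (intro add_less_le_mono) auto
    ultimately show "l + s * 3 ^ k \<in> prim_exps (Suc k)"
      using assms by (auto simp: mem_prim_exps dvd_iff)
  qed
  show "(\<lambda>L. (L mod 3 ^ k, L div 3 ^ k)) ` prim_exps (Suc k) \<subseteq> prim_exps k \<times> {..<3}"
  proof (rule image_subsetI)
    fix L assume L: "L \<in> prim_exps (Suc k)"
    then have "\<not> 3 dvd L mod 3 ^ k"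
      using dvd_iff[of "L mod 3 ^ k" "L div 3 ^ k"]
      by (simp add: mem_prim_exps mod_div_mult_eq)
    moreover have "L div 3 ^ k < 3"
      using L by (simp add: mem_prim_exps less_mult_imp_div_less)
    ultimately show "(L mod 3 ^ k, L div 3 ^ k) \<in> prim_exps k \<times> {..<3}"
      using assms by (auto simp: mem_prim_exps intro: Nat.gr0I)
  qed
  show "\<forall>x\<in>prim_exps k \<times> {..<3}.
      (\<lambda>L. (L mod 3 ^ k, L div 3 ^ k)) ((\<lambda>(l, s). l + s * 3 ^ k) x) = x"
    using assms by (auto simp: mem_prim_exps)
  show "\<forall>L\<in>prim_exps (Suc k).
      (\<lambda>(l, s). l + s * 3 ^ k) ((\<lambda>L. (L mod 3 ^ k, L div 3 ^ k)) L) = L"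
    by (simp add: mod_div_mult_eq)
qed

lemma Nk_Suc_eq_prod:
  assumes "1 \<le> k"
  shows "Nk (Suc k) F =
    (\<Prod>l\<in>prim_exps k. \<Prod>s<3. ipoly F (omega (Suc k) ^ l * omega 1 ^ s))"
proof -
  have "omega (Suc k) ^ (l + s * 3 ^ k) = omega (Suc k) ^ l * (omega (Suc k) ^ 3 ^ k) ^ s" for l s
    by (simp add: power_add mult.commute[of s] flip: power_mult)
  then have pow_split: "omega (Suc k) ^ (l + s * 3 ^ k) = omega (Suc k) ^ l * omega 1 ^ s" for l s
    by (simp only: omega_Suc_pow)
  have "Nk (Suc k) F =
      (\<Prod>(l, s)\<in>prim_exps k \<times> {..<3}. ipoly F (omega (Suc k) ^ l * omega 1 ^ s))"
    unfolding Nk_eq_prod prod.reindex_bij_betw[OF prim_exps_Suc[OF assms], symmetric]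
    by (simp add: case_prod_beta pow_split)
  then show ?thesis
    by (simp add: prod.cartesian_product)
qed

lemma three_eq_root_minus_one_pow6:
  assumes "2 \<le> k"
  shows "\<exists>W. \<forall>l\<in>prim_exps k. 3 = (omega k ^ l - 1) ^ 6 * ipoly W (omega k ^ l)"
proof -
  define M :: nat where "M = 3 ^ (k - 2)"
  have "poly ([:0, 1:] ^ M - 1 :: int poly) 1 = 0"
    by simp
  then obtain G :: "int poly" where G: "[:0, 1:] ^ M - 1 = [:-1, 1:] * G"
    unfolding poly_eq_0_iff_dvd by (auto elim: dvdE)
  define T :: "int poly" where "T = [:0, 1:] ^ M"
  define W where "W = G ^ 6 * (10 + 11 * T + 7 * T ^ 2 + 10 * T ^ 3 + 4 * T ^ 4 - 4 * T ^ 5)"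
  show ?thesis
  proof (intro exI ballI)
    fix l assume l: "l \<in> prim_exps k"
    define z where "z = omega k ^ l"
    define u where "u = z ^ M"
    have "M * 3 = 3 ^ (k - 1)"
      using assms by (simp add: M_def power_Suc2[symmetric] Suc_diff_Suc numeral_2_eq_2)
    then have "u ^ 3 = z ^ 3 ^ (k - 1)"
      unfolding u_def by (metis power_mult)
    then have "(u ^ 3) ^ 2 + u ^ 3 + 1 = 0"
      using omega_pow_prim_exps[of k l] assms l unfolding z_def by simp
    then have u: "u ^ 6 + u ^ 3 + 1 = 0"
      by (simp flip: power_mult)
    \<comment> \<open>\<open>3 = \<Phi>\<^sub>9(1)\<close> is the product of the \<open>1 - u\<^sup>j\<close> over \<open>j\<close> prime to 9, each
      a multiple of \<open>1 - u\<close>; the cofactor is the product of the quotients modulo \<open>\<Phi>\<^sub>9(u)\<close>\<close>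
    have "3 = (u - 1) ^ 6 * (10 + 11 * u + 7 * u ^ 2 + 10 * u ^ 3 + 4 * u ^ 4 - 4 * u ^ 5)"
      using u by algebra
    moreover have "u - 1 = (z - 1) * ipoly G z"
      using arg_cong[OF G, of "\<lambda>p. ipoly p z"] unfolding u_def by (simp add: algebra_simps)
    ultimately show "3 = (omega k ^ l - 1) ^ 6 * ipoly W (omega k ^ l)"
      unfolding W_def T_def z_def[symmetric] by (simp add: u_def power_mult_distrib mult_ac)
  qed
qed

section \<open>The cubic norm\<close>

definition cubic_norm :: "'a::comm_ring_1 \<Rightarrow> 'a \<Rightarrow> 'a \<Rightarrow> 'a \<Rightarrow> 'a" where
  "cubic_norm z a b c = a ^ 3 + z * b ^ 3 + z ^ 2 * c ^ 3 - 3 * z * a * b * c"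

lemma cubic_norm_factor:
  fixes a b c w u :: complex
  assumes "u ^ 2 + u + 1 = 0"
  shows "(a + w * b + w ^ 2 * c) * (a + (w * u) * b + (w * u) ^ 2 * c)
           * (a + (w * u ^ 2) * b + (w * u ^ 2) ^ 2 * c) = cubic_norm (w ^ 3) a b c"
  using assms unfolding cubic_norm_def by algebra

lemma cubic_norm_one_plus:
  "cubic_norm z (1 + a) b c = 1 + 3 * (a + a ^ 2 - z * b * c) + cubic_norm z a b c"
  unfolding cubic_norm_def by (simp add: algebra_simps power2_eq_square power3_eq_cube)

lemma cubic_norm_linear_term_split:
  fixes p y a b c d e f :: "'a::comm_ring_1"
  shows "\<exists>X Y. (p * a + 3 * d) + (p * a + 3 * d) ^ 2 - y * (p * b + 3 * e) * (p * c + 3 * f)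
                = p * a + p ^ 2 * Y + 3 * X"
  by (rule exI[of _ "d + 2 * p * a * d + 3 * d ^ 2 - y * p * (b * f + e * c) - 3 * y * e * f"],
      rule exI[of _ "a ^ 2 - y * b * c"]) (simp add: algebra_simps power2_eq_square)

lemma ipoly_cubic_norm [simp]:
  "ipoly (cubic_norm [:0, 1:] a b c) z = cubic_norm z (ipoly a z) (ipoly b z) (ipoly c z)"
  unfolding cubic_norm_def by simp

lemma poly_cubic_norm [simp]:
  "poly (cubic_norm [:0, 1:] a b c) x = cubic_norm x (poly a x) (poly b x) (poly c x)"
  unfolding cubic_norm_def by simp

lemma cube_cong_int: "[x ^ 3 = x] (mod 3)" for x :: int
proof -
  have "x mod 3 = 0 \<or> x mod 3 = 1 \<or> x mod 3 = 2"
    by presburger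
  then have "(x mod 3) ^ 3 mod 3 = x mod 3"
    by auto
  then show ?thesis
    unfolding cong_def by (simp add: power_mod)
qed

lemma cubic_norm_one_cong: "[cubic_norm 1 a b c = a + b + c] (mod 3)" for a b c :: int
proof -
  have "[a ^ 3 + b ^ 3 + c ^ 3 - 3 * (a * b * c) = a + b + c - 0] (mod 3)"
    by (intro cong_add cong_diff cube_cong_int) (simp add: cong_0_iff)
  then show ?thesis
    by (simp add: cubic_norm_def mult.assoc)
qed

section \<open>Trisection and the norm from level k + 1 to level k\<close>

definition trisection :: "int poly \<Rightarrow> int poly \<Rightarrow> int poly \<Rightarrow> int poly \<Rightarrow> bool" where
  "trisection F a b c \<longleftrightarrow>
     (\<forall>v. ipoly F v = ipoly a (v ^ 3) + v * ipoly b (v ^ 3) + v ^ 2 * ipoly c (v ^ 3))"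

lemma trisection_exists:
  "\<exists>a b c. trisection F a b c \<and> poly F 1 = poly a 1 + poly b 1 + poly c 1"
proof (induction F)
  case 0
  show ?case
    by (rule exI[of _ 0])+ (simp add: trisection_def)
next
  case (pCons d F)
  then obtain a b c where "trisection F a b c" and F1: "poly F 1 = poly a 1 + poly b 1 + poly c 1"
    by blast
  then have "trisection (pCons d F) (pCons d c) a b"
    unfolding trisection_def by (simp add: algebra_simps power2_eq_square power3_eq_cube)
  moreover have "poly (pCons d F) 1 = poly (pCons d c) 1 + poly a 1 + poly b 1"
    using F1 by simp
  ultimately show ?case
    by blast
qed

lemma trisection_one_plus: "trisection F a b c \<Longrightarrow> trisection (1 + F) (1 + a) b c"
  unfolding trisection_def by simp

lemma trisection_mult:
  assumes "trisection F a b c" and "trisection G d e f"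
  shows "trisection (F * G) (a * d + [:0, 1:] * (b * f + c * e))
           (a * e + b * d + [:0, 1:] * c * f) (a * f + b * e + c * d)"
  using assms unfolding trisection_def
  by (simp add: algebra_simps power2_eq_square power3_eq_cube)

lemma trisection_mod_3:
  assumes "\<And>v. ipoly F v = (v ^ 3 - 1) ^ m * ipoly g v + 3 * ipoly q v"
    and "trisection g a b c" and "trisection q d e f"
  shows "trisection F ([:-1, 1:] ^ m * a + 3 * d) ([:-1, 1:] ^ m * b + 3 * e)
           ([:-1, 1:] ^ m * c + 3 * f)"
  using assms unfolding trisection_def by (simp add: algebra_simps)

lemma exists_cube_root: "\<exists>w::complex. w ^ 3 = z"
proof -
  have "rcis (root 3 (cmod z)) (Arg z / 3) ^ 3 = rcis (root 3 (cmod z) ^ 3) (Arg z)"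
    by (simp add: DeMoivre2)
  also have "\<dots> = z"
    by (simp add: rcis_cmod_Arg)
  finally show ?thesis ..
qed

lemma cubic_norm_trisection:
  assumes "trisection F a b c" and "w ^ 3 = z"
  shows "cubic_norm z (ipoly a z) (ipoly b z) (ipoly c z)
           = ipoly F w * ipoly F (w * omega 1) * ipoly F (w * omega 1 ^ 2)"
proof -
  have "(omega 1 ^ 2) ^ 3 = (omega 1 ^ 3) ^ 2"
    by (simp flip: power_mult)
  then have "(w * omega 1) ^ 3 = z" "(w * omega 1 ^ 2) ^ 3 = z"
    using assms(2) by (simp_all only: power_mult_distrib omega_1_cube power_one mult_1_right)
  then show ?thesis
    using assms cubic_norm_factor[OF omega_1_cube_root, of "ipoly a z" w "ipoly b z" "ipoly c z"]
    unfolding trisection_def by simp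
qed

lemma cubic_norm_trisection_pow_mult:
  assumes "trisection ([:-1, 1:] ^ n * h) A B C" and "trisection h H0 H1 H2"
  shows "cubic_norm z (ipoly A z) (ipoly B z) (ipoly C z)
           = (z - 1) ^ n * cubic_norm z (ipoly H0 z) (ipoly H1 z) (ipoly H2 z)"
proof -
  obtain w where w: "w ^ 3 = z"
    using exists_cube_root by blast
  have "(w - 1) * (w * omega 1 - 1) * (w * omega 1 ^ 2 - 1) = z - 1"
    using cubic_norm_factor[OF omega_1_cube_root, of "-1" w 1 0] w
    by (simp add: cubic_norm_def)
  then show ?thesis
    unfolding cubic_norm_trisection[OF assms(1) w] cubic_norm_trisection[OF assms(2) w]
    by (simp add: power_mult_distrib mult_ac flip: power_mult_distrib)
qed

lemma Nk_Suc_trisection: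
  assumes "1 \<le> k" and "trisection F a b c"
  shows "Nk (Suc k) F = Nk k (cubic_norm [:0, 1:] a b c)"
  unfolding Nk_Suc_eq_prod[OF assms(1)] Nk_eq_prod[of k]
proof (rule prod.cong[OF refl])
  fix l
  have cube: "(omega (Suc k) ^ l) ^ 3 = omega k ^ l"
    by (metis omega_Suc_cube power_mult mult.commute)
  have "(\<Prod>s<3. ipoly F (omega (Suc k) ^ l * omega 1 ^ s))
      = ipoly F (omega (Suc k) ^ l) * ipoly F (omega (Suc k) ^ l * omega 1)
          * ipoly F (omega (Suc k) ^ l * omega 1 ^ 2)"
    by (simp add: eval_nat_numeral)
  also have "\<dots> = ipoly (cubic_norm [:0, 1:] a b c) (omega k ^ l)"
    using cubic_norm_trisection[OF assms(2) cube] by simp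
  finally show "(\<Prod>s<3. ipoly F (omega (Suc k) ^ l * omega 1 ^ s))
      = ipoly (cubic_norm [:0, 1:] a b c) (omega k ^ l)" .
qed

lemma Nk_Suc_one_plus:
  assumes "1 \<le> k" and "trisection ([:-1, 1:] ^ n * h) A B C" and "trisection h H0 H1 H2"
  shows "Nk (Suc k) (1 + [:-1, 1:] ^ n * h)
           = Nk k (1 + 3 * (A + A ^ 2 - [:0, 1:] * B * C)
                     + [:-1, 1:] ^ n * cubic_norm [:0, 1:] H0 H1 H2)"
  unfolding Nk_Suc_trisection[OF assms(1) trisection_one_plus[OF assms(2)]]
  by (rule Nk_cong)
    (simp add: cubic_norm_one_plus cubic_norm_trisection_pow_mult[OF assms(2,3)])

section \<open>Descent for k at least 2\<close>

lemma Nk_Suc_reduce: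
  assumes "1 \<le> k" and ABC: "trisection ([:-1, 1:] ^ n * h) A B C"
    and absorb: "\<And>l. l \<in> prim_exps k \<Longrightarrow>
      3 * ipoly (A + A ^ 2 - [:0, 1:] * B * C) (omega k ^ l)
        = (omega k ^ l - 1) ^ Suc n * ipoly D (omega k ^ l)"
  shows "\<exists>h'. Nk (Suc k) (1 + [:-1, 1:] ^ n * h) = Nk k (1 + [:-1, 1:] ^ n * h')
           \<and> [poly h' 1 = poly h 1] (mod 3)"
proof -
  obtain H0 H1 H2 where H: "trisection h H0 H1 H2"
    and h1: "poly h 1 = poly H0 1 + poly H1 1 + poly H2 1"
    using trisection_exists by blast
  define R where "R = cubic_norm [:0, 1:] H0 H1 H2"
  define h' where "h' = R + [:-1, 1:] * D"
  have "Nk (Suc k) (1 + [:-1, 1:] ^ n * h)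
      = Nk k (1 + 3 * (A + A ^ 2 - [:0, 1:] * B * C) + [:-1, 1:] ^ n * R)"
    unfolding R_def by (rule Nk_Suc_one_plus[OF assms(1) ABC H])
  also have "\<dots> = Nk k (1 + [:-1, 1:] ^ n * h')"
  proof (rule Nk_cong)
    fix l assume l: "l \<in> prim_exps k"
    define z where "z = omega k ^ l"
    have "ipoly (1 + 3 * (A + A ^ 2 - [:0, 1:] * B * C) + [:-1, 1:] ^ n * R) z
        = 1 + 3 * ipoly (A + A ^ 2 - [:0, 1:] * B * C) z + (z - 1) ^ n * ipoly R z"
      by simp
    also have "\<dots> = 1 + (z - 1) ^ n * (ipoly R z + (z - 1) * ipoly D z)"
      unfolding z_def absorb[OF l] by (simp add: algebra_simps)
    also have "\<dots> = ipoly (1 + [:-1, 1:] ^ n * h') z"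
      by (simp add: h'_def algebra_simps)
    finally show "ipoly (1 + 3 * (A + A ^ 2 - [:0, 1:] * B * C) + [:-1, 1:] ^ n * R) (omega k ^ l)
        = ipoly (1 + [:-1, 1:] ^ n * h') (omega k ^ l)"
      unfolding z_def .
  qed
  finally have "Nk (Suc k) (1 + [:-1, 1:] ^ n * h) = Nk k (1 + [:-1, 1:] ^ n * h')" .
  moreover have "[poly h' 1 = poly h 1] (mod 3)"
    using cubic_norm_one_cong h1 by (simp add: h'_def R_def)
  ultimately show ?thesis
    by blast
qed

lemma Nk_Suc_reduce_pow5:
  assumes "2 \<le> k"
  shows "\<exists>h'. Nk (Suc k) (1 + [:-1, 1:] ^ 5 * h) = Nk k (1 + [:-1, 1:] ^ 5 * h')
           \<and> [poly h' 1 = poly h 1] (mod 3)"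
proof -
  obtain A B C where ABC: "trisection ([:-1, 1:] ^ 5 * h) A B C"
    using trisection_exists by blast
  obtain W where W: "\<forall>l\<in>prim_exps k. 3 = (omega k ^ l - 1) ^ 6 * ipoly W (omega k ^ l)"
    using three_eq_root_minus_one_pow6[OF assms] by blast
  show ?thesis
  proof (rule Nk_Suc_reduce[OF _ ABC, of _ "W * (A + A ^ 2 - [:0, 1:] * B * C)"])
    fix l assume "l \<in> prim_exps k"
    then have "3 = (omega k ^ l - 1) ^ 6 * ipoly W (omega k ^ l)"
      using W by blast
    then show "3 * ipoly (A + A ^ 2 - [:0, 1:] * B * C) (omega k ^ l)
        = (omega k ^ l - 1) ^ Suc 5 * ipoly (W * (A + A ^ 2 - [:0, 1:] * B * C)) (omega k ^ l)"
      by (subst (1) \<open>3 = _\<close>) (simp only: ipoly_mult mult_ac Suc_numeral semiring_norm)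
  qed (use assms in simp)
qed

lemma Nk_Suc_reduce_pow7:
  assumes "2 \<le> k"
  shows "\<exists>h'. Nk (Suc k) (1 + [:-1, 1:] ^ 7 * h) = Nk k (1 + [:-1, 1:] ^ 7 * h')
           \<and> [poly h' 1 = poly h 1] (mod 3)"
proof -
  define P :: "int poly" where "P = [:0, -2, 5, -6, 5, -2:]"
  obtain a b c where g_tri: "trisection ([:-1, 1:] * h) a b c"
    using trisection_exists by blast
  obtain d e f where q_tri: "trisection (P * ([:-1, 1:] * h)) d e f"
    using trisection_exists by blast
  \<comment> \<open>\<open>(x - 1)\<^sup>6 = (x\<^sup>3 - 1)\<^sup>2 + 3 P\<close>\<close>
  have "ipoly ([:-1, 1:] ^ 7 * h) v
      = (v ^ 3 - 1) ^ 2 * ipoly ([:-1, 1:] * h) v + 3 * ipoly (P * ([:-1, 1:] * h)) v" for v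
    unfolding P_def by (simp add: algebra_simps eval_nat_numeral)
  note ABC = trisection_mod_3[OF this g_tri q_tri]
  obtain X Y where E: "([:-1, 1:] ^ 2 * a + 3 * d) + ([:-1, 1:] ^ 2 * a + 3 * d) ^ 2
      - [:0, 1:] * ([:-1, 1:] ^ 2 * b + 3 * e) * ([:-1, 1:] ^ 2 * c + 3 * f)
      = [:-1, 1:] ^ 2 * a + ([:-1, 1:] ^ 2) ^ 2 * Y + 3 * X"
    using cubic_norm_linear_term_split by blast
  obtain W where W: "\<forall>l\<in>prim_exps k. 3 = (omega k ^ l - 1) ^ 6 * ipoly W (omega k ^ l)"
    using three_eq_root_minus_one_pow6[OF assms] by blast
  define D where "D = W * (a + [:-1, 1:] ^ 2 * Y) + [:-1, 1:] ^ 4 * W ^ 2 * X"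
  show ?thesis
  proof (rule Nk_Suc_reduce[OF _ ABC, of _ D], unfold E)
    fix l assume "l \<in> prim_exps k"
    define z where "z = omega k ^ l"
    have "3 = (z - 1) ^ 6 * ipoly W z"
      using W \<open>l \<in> prim_exps k\<close> unfolding z_def by blast
    then have "3 * ((z - 1) ^ 2 * ipoly a z + (z - 1) ^ 4 * ipoly Y z + 3 * ipoly X z)
        = (z - 1) ^ 8 * (ipoly W z * (ipoly a z + (z - 1) ^ 2 * ipoly Y z)
            + (z - 1) ^ 4 * ipoly W z ^ 2 * ipoly X z)"
      by algebra
    then show "3 * ipoly ([:-1, 1:] ^ 2 * a + ([:-1, 1:] ^ 2) ^ 2 * Y + 3 * X) (omega k ^ l)
        = (omega k ^ l - 1) ^ Suc 7 * ipoly D (omega k ^ l)"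
      unfolding z_def D_def by (simp flip: power_mult)
  qed (use assms in simp)
qed

lemma Nk_reduce_iterate:
  assumes reduce: "\<And>k h. 2 \<le> k \<Longrightarrow> \<exists>h'. Nk (Suc k) (1 + [:-1, 1:] ^ n * h)
                      = Nk k (1 + [:-1, 1:] ^ n * h') \<and> [poly h' 1 = poly h 1] (mod 3)"
    and "2 \<le> j" and "j \<le> i"
  shows "\<exists>h'. Nk i (1 + [:-1, 1:] ^ n * h) = Nk j (1 + [:-1, 1:] ^ n * h')
           \<and> [poly h' 1 = poly h 1] (mod 3)"
  using \<open>j \<le> i\<close>
proof (induction i arbitrary: h rule: dec_induct)
  case base
  show ?case
    by (intro exI[of _ h]) simp
next
  case (step i)
  obtain h1 where h1: "Nk (Suc i) (1 + [:-1, 1:] ^ n * h) = Nk i (1 + [:-1, 1:] ^ n * h1)"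
    "[poly h1 1 = poly h 1] (mod 3)"
    using reduce[of i h] \<open>2 \<le> j\<close> \<open>j \<le> i\<close> by auto
  obtain h2 where "Nk i (1 + [:-1, 1:] ^ n * h1) = Nk j (1 + [:-1, 1:] ^ n * h2)"
    "[poly h2 1 = poly h1 1] (mod 3)"
    using step.IH by blast
  with h1 show ?case
    by (metis cong_trans)
qed

section \<open>From level 2 to level 1\<close>

lemma ipoly_cube_root_reduction:
  "\<exists>a b. (\<forall>z. z ^ 2 + z + 1 = 0 \<longrightarrow> ipoly p z = of_int a + of_int b * (1 - z))
           \<and> [a = poly p 1] (mod 3)"
proof (induction p)
  case 0
  show ?case
    by (intro exI[of _ 0]) simp
next
  case (pCons c p)
  then obtain a b
    where ab: "\<forall>z. z ^ 2 + z + 1 = 0 \<longrightarrow> ipoly p z = of_int a + of_int b * (1 - z)"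
    and a: "[a = poly p 1] (mod 3)"
    by blast
  have "ipoly (pCons c p) z = of_int (c + a + 3 * b) + of_int (- a - 2 * b) * (1 - z)"
    if "z ^ 2 + z + 1 = 0" for z
  proof -
    have "ipoly (pCons c p) z = of_int c + z * (of_int a + of_int b * (1 - z))"
      using ab that by simp
    also have "\<dots> = of_int (c + a + 3 * b) + of_int (- a - 2 * b) * (1 - z)"
      using that by simp algebra
    finally show ?thesis .
  qed
  moreover have "[c + a + 3 * b = poly (pCons c p) 1] (mod 3)"
    using cong_add[OF cong_refl[of c] cong_add[OF a cong_mult_self_left[of 3 b]]]
    by (simp add: add.assoc)
  ultimately show ?case
    by blast
qed

(* With pi = 1 - z one has pi^2 = 3 pi - 3 and pi^6 = -27; the right-hand side collects the
   left-hand side in the basis 1, pi. *)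
lemma one_minus_cube_root_identity:
  fixes z :: complex and a0 a1 x0 x1 y0 y1 r0 r1 :: int
  assumes "z ^ 2 + z + 1 = 0"
  shows "(1 - z) * (1 + 3 * ((z - 1) * (a0 + a1 * (1 - z)) + (z - 1) ^ 2 * (y0 + y1 * (1 - z))
            + 3 * (x0 + x1 * (1 - z))) + (z - 1) ^ 5 * (r0 + r1 * (1 - z)))
       = (1 - z) + 9 * (of_int (a0 + 3 * (a1 - x1 - y0 - 2 * y1 + r0))
            + of_int (x0 + 3 * x1 + 2 * y0 + 3 * y1 + 3 * r1 - a0 - 2 * a1) * (1 - z))"
  using assms by simp algebra

lemma Nk_1_one_minus_mult: "Nk 1 ([:1, -1:] * G) = 3 * Nk 1 G"
proof -
  have "(1 - omega 1) * (1 - omega 1 ^ 2) = 3"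
    using omega_1_cube_root omega_1_cube by algebra
  then have "(\<Prod>l\<in>prim_exps 1. ipoly [:1, -1:] (omega 1 ^ l)) = 3"
    unfolding prim_exps_1 by simp
  then show ?thesis
    unfolding Nk_eq_prod ipoly_mult prod.distrib by simp
qed

lemma Nk_2_one_plus_pow5:
  "\<exists>a X Y R. Nk 2 (1 + [:-1, 1:] ^ 5 * h)
       = Nk 1 (1 + 3 * ([:-1, 1:] * a + [:-1, 1:] ^ 2 * Y + 3 * X) + [:-1, 1:] ^ 5 * R)
     \<and> poly a 1 = poly h 1"
proof -
  obtain H0 H1 H2 where H: "trisection h H0 H1 H2"
    and h1: "poly h 1 = poly H0 1 + poly H1 1 + poly H2 1"
    using trisection_exists by blast
  define a where "a = H0 + [:0, 1:] * (H2 + H1)"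
  define b where "b = H1 + H0 + [:0, 1:] * H2"
  define c where "c = H2 + H1 + H0"
  have "trisection [:1, 1, 1:] 1 1 1"
    by (simp add: trisection_def algebra_simps power2_eq_square)
  from trisection_mult[OF this H] have g_tri: "trisection ([:1, 1, 1:] * h) a b c"
    by (simp add: a_def b_def c_def)
  define P :: "int poly" where "P = [:0, 2, -3, 3, -2:]"
  obtain d e f where q_tri: "trisection (P * h) d e f"
    using trisection_exists by blast
  \<comment> \<open>\<open>(x - 1)\<^sup>5 = (x\<^sup>3 - 1)(x\<^sup>2 + x + 1) + 3 P\<close>\<close>
  have "ipoly ([:-1, 1:] ^ 5 * h) v
      = (v ^ 3 - 1) ^ 1 * ipoly ([:1, 1, 1:] * h) v + 3 * ipoly (P * h) v" for v
    unfolding P_def by (simp add: algebra_simps eval_nat_numeral)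
  from trisection_mod_3[OF this g_tri q_tri]
  have ABC: "trisection ([:-1, 1:] ^ 5 * h) ([:-1, 1:] * a + 3 * d) ([:-1, 1:] * b + 3 * e)
      ([:-1, 1:] * c + 3 * f)"
    by simp
  obtain X Y where E: "([:-1, 1:] * a + 3 * d) + ([:-1, 1:] * a + 3 * d) ^ 2
      - [:0, 1:] * ([:-1, 1:] * b + 3 * e) * ([:-1, 1:] * c + 3 * f)
      = [:-1, 1:] * a + [:-1, 1:] ^ 2 * Y + 3 * X"
    using cubic_norm_linear_term_split by blast
  have "Nk 2 (1 + [:-1, 1:] ^ 5 * h) = Nk 1 (1 + 3 * ([:-1, 1:] * a + [:-1, 1:] ^ 2 * Y + 3 * X)
      + [:-1, 1:] ^ 5 * cubic_norm [:0, 1:] H0 H1 H2)"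
    using Nk_Suc_one_plus[OF _ ABC H, of 1] unfolding E Suc_1 by simp
  moreover have "poly a 1 = poly h 1"
    by (simp add: a_def h1)
  ultimately show ?thesis
    by blast
qed

lemma three_Nk_1_one_plus_pow5:
  "\<exists>A B. 3 * Nk 1 (1 + 3 * ([:-1, 1:] * a + [:-1, 1:] ^ 2 * Y + 3 * X) + [:-1, 1:] ^ 5 * R)
           = Nk 1 ([:1, -1:] + smult 9 ([:A:] + smult B [:1, -1:])) \<and> [A = poly a 1] (mod 3)"
proof -
  define G where "G = 1 + 3 * ([:-1, 1:] * a + [:-1, 1:] ^ 2 * Y + 3 * X) + [:-1, 1:] ^ 5 * R"
  obtain a0 a1
    where ra: "\<forall>z. z ^ 2 + z + 1 = 0 \<longrightarrow> ipoly a z = of_int a0 + of_int a1 * (1 - z)"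
    and a0: "[a0 = poly a 1] (mod 3)"
    using ipoly_cube_root_reduction by blast
  obtain x0 x1
    where rx: "\<forall>z. z ^ 2 + z + 1 = 0 \<longrightarrow> ipoly X z = of_int x0 + of_int x1 * (1 - z)"
    using ipoly_cube_root_reduction by blast
  obtain y0 y1
    where ry: "\<forall>z. z ^ 2 + z + 1 = 0 \<longrightarrow> ipoly Y z = of_int y0 + of_int y1 * (1 - z)"
    using ipoly_cube_root_reduction by blast
  obtain r0 r1
    where rr: "\<forall>z. z ^ 2 + z + 1 = 0 \<longrightarrow> ipoly R z = of_int r0 + of_int r1 * (1 - z)"
    using ipoly_cube_root_reduction by blast
  define A where "A = a0 + 3 * (a1 - x1 - y0 - 2 * y1 + r0)"
  define B where "B = x0 + 3 * x1 + 2 * y0 + 3 * y1 + 3 * r1 - a0 - 2 * a1"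
  have "ipoly ([:1, -1:] * G) z = ipoly ([:1, -1:] + smult 9 ([:A:] + smult B [:1, -1:])) z"
    if z: "z ^ 2 + z + 1 = 0" for z
  proof -
    have "ipoly ([:1, -1:] * G) z = (1 - z) * (1 + 3 * ((z - 1) * ipoly a z
        + (z - 1) ^ 2 * ipoly Y z + 3 * ipoly X z) + (z - 1) ^ 5 * ipoly R z)"
      by (simp add: G_def algebra_simps)
    also have "\<dots> = (1 - z) + 9 * (of_int A + of_int B * (1 - z))"
      unfolding A_def B_def using ra rx ry rr z one_minus_cube_root_identity[OF z] by simp
    also have "\<dots> = ipoly ([:1, -1:] + smult 9 ([:A:] + smult B [:1, -1:])) z"
      by (simp add: algebra_simps)
    finally show ?thesis .
  qed
  then have "Nk 1 ([:1, -1:] * G) = Nk 1 ([:1, -1:] + smult 9 ([:A:] + smult B [:1, -1:]))"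
    using omega_pow_prim_exps[of 1] by (intro Nk_cong) simp
  moreover have "[A = poly a 1] (mod 3)"
  proof -
    have "[A = a0] (mod 3)"
      unfolding A_def
      using cong_add[OF cong_refl[of a0] cong_mult_self_left[of 3 "a1 - x1 - y0 - 2 * y1 + r0"]]
      by (simp only: add_0_right)
    then show ?thesis
      using a0 by (rule cong_trans)
  qed
  ultimately show ?thesis
    unfolding G_def Nk_1_one_minus_mult by blast
qed

lemma three_Nk_2_pow5:
  "\<exists>A B. 3 * Nk 2 (1 + [:-1, 1:] ^ 5 * h) = Nk 1 ([:1, -1:] + smult 9 ([:A:] + smult B [:1, -1:]))
           \<and> [A = poly h 1] (mod 3)"
  using Nk_2_one_plus_pow5[of h] three_Nk_1_one_plus_pow5 by metis

theorem lemma4p4: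
  fixes m :: int and i :: nat
  assumes "i \<ge> 2"
  shows "(\<forall>h :: int poly.
            of_int m = Nk i (1 + [:-1, 1:] ^ 5 * h) \<longrightarrow>
              (\<forall>j. 2 \<le> j \<and> j \<le> i \<longrightarrow>
                 (\<exists>hj :: int poly. of_int m = Nk j (1 + [:-1, 1:] ^ 5 * hj) \<and>
                    (3 dvd poly hj 1 \<longleftrightarrow> 3 dvd poly h 1))) \<and>
              (\<exists>A B :: int.
                 of_int (3 * m) = Nk 1 ([:1, -1:] + smult 9 ([:A:] + smult B [:1, -1:])) \<and>
                 (\<not> 3 dvd poly h 1 \<longrightarrow> \<not> 3 dvd A) \<and>
                 (3 dvd poly h 1 \<longrightarrow> 3 dvd A)))
       \<and> (\<forall>t :: int poly.
            of_int m = Nk i (1 + [:-1, 1:] ^ 7 * t) \<longrightarrow>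
              (\<forall>j. 2 \<le> j \<and> j \<le> i \<longrightarrow>
                 (\<exists>tj :: int poly. of_int m = Nk j (1 + [:-1, 1:] ^ 7 * tj) \<and>
                    (3 dvd poly tj 1 \<longleftrightarrow> 3 dvd poly t 1))))"
proof (intro conjI allI impI)
  fix h :: "int poly" and j
  assume "of_int m = Nk i (1 + [:-1, 1:] ^ 5 * h)" and "2 \<le> j \<and> j \<le> i"
  then show "\<exists>hj. of_int m = Nk j (1 + [:-1, 1:] ^ 5 * hj)
      \<and> (3 dvd poly hj 1 \<longleftrightarrow> 3 dvd poly h 1)"
    using Nk_reduce_iterate[OF Nk_Suc_reduce_pow5, of j i h] by (metis cong_dvd_iff)
next
  fix h :: "int poly"
  assume m: "of_int m = Nk i (1 + [:-1, 1:] ^ 5 * h)"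
  obtain h2 where "Nk i (1 + [:-1, 1:] ^ 5 * h) = Nk 2 (1 + [:-1, 1:] ^ 5 * h2)"
    and h2: "[poly h2 1 = poly h 1] (mod 3)"
    using Nk_reduce_iterate[OF Nk_Suc_reduce_pow5, of 2 i h] assms by auto
  moreover obtain A B where "3 * Nk 2 (1 + [:-1, 1:] ^ 5 * h2)
      = Nk 1 ([:1, -1:] + smult 9 ([:A:] + smult B [:1, -1:]))" and "[A = poly h2 1] (mod 3)"
    using three_Nk_2_pow5 by blast
  ultimately show "\<exists>A B. of_int (3 * m) = Nk 1 ([:1, -1:] + smult 9 ([:A:] + smult B [:1, -1:]))
      \<and> (\<not> 3 dvd poly h 1 \<longrightarrow> \<not> 3 dvd A) \<and> (3 dvd poly h 1 \<longrightarrow> 3 dvd A)"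
    using m cong_dvd_iff[OF cong_trans[OF _ h2]] by auto
next
  fix t :: "int poly" and j
  assume "of_int m = Nk i (1 + [:-1, 1:] ^ 7 * t)" and "2 \<le> j \<and> j \<le> i"
  then show "\<exists>tj. of_int m = Nk j (1 + [:-1, 1:] ^ 7 * tj)
      \<and> (3 dvd poly tj 1 \<longleftrightarrow> 3 dvd poly t 1)"
    using Nk_reduce_iterate[OF Nk_Suc_reduce_pow7, of j i t] by (metis cong_dvd_iff)
qed

end
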